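(* Let $S$ be a $\Gamma$-hemiring, let $\mu$ be a fuzzy h-quasi-ideal of $S$ and let $x\in S$. Then $\langle x,\mu\rangle$ is a fuzzy h-quasi-ideal of $S$.
   Context: A $\Gamma$-hemiring is a pair of additive commutative semigroups with zero $S$ and $\Gamma$ with a map $S\times\Gamma\times S\to S$, $(a,\alpha,b)\mapsto a\alpha b$, such that for all $a,b,c\in S$, $\alpha,\beta\in\Gamma$: $(a+b)\alpha c=a\alpha c+b\alpha c$; $a\alpha(b+c)=a\alpha b+a\alpha c$; $a(\alpha+\beta)b=a\alpha b+a\beta b$; $a\alpha(b\beta c)=(a\alpha b)\beta c$; $0\alpha a=0=a\alpha0$; $a0b=0=b0a$. A fuzzy subset is a map $S\to[0,1]$; $\chi_S$ is the constant function $1$. For fuzzy subsets $\mu,\theta$, the generalized h-product is $(\mu\, o_h\,\theta)(x)=\sup\min_{i}\min\{\mu(a_i),\mu(c_i),\theta(b_i),\theta(d_i)\}$, the supremum over all $n\ge1$, $z,a_i,b_i,c_i,d_i\in S$, $\gamma_i,\delta_i\in\Gamma$ with $x+\sum_{i=1}^n a_i\gamma_ib_i+z=\sum_{i=1}^n c_i\delta_id_i+z$, and $(\mu\, o_h\,\theta)(x)=0$ if no such expression exists. A fuzzy subset $\mu$ is a fuzzy h-quasi-ideal if for all $x,y,a,b,z\in S$: $\mu(x+y)\ge\min\{\mu(x),\mu(y)\}$; $x+a+z=b+z$ implies $\mu(x)\ge\min\{\mu(a),\mu(b)\}$; and $\min\{(\mu\,o_h\,\chi_S)(x),(\chi_S\,o_h\,\mu)(x)\}\le\mu(x)$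 for all $x\in S$. The extension of $\mu$ by $x$ is $\langle x,\mu\rangle(y)=\inf_{s\in S,\ \alpha,\gamma\in\Gamma}\mu(x\alpha s\gamma y)$. *)

theory Defs
  imports Main "HOL.Real"
begin

definition gamma_hemiring :: "('s::comm_monoid_add \<Rightarrow> 'g::comm_monoid_add \<Rightarrow> 's \<Rightarrow> 's) \<Rightarrow> bool" where
  "gamma_hemiring mult \<longleftrightarrow>
     (\<forall>a b c \<alpha>. mult (a + b) \<alpha> c = mult a \<alpha> c + mult b \<alpha> c) \<and>
     (\<forall>a b c \<alpha>. mult a \<alpha> (b + c) = mult a \<alpha> b + mult a \<alpha> c) \<and>
     (\<forall>a b \<alpha> \<beta>. mult a (\<alpha> + \<beta>) b = mult a \<alpha> b + mult a \<beta> b) \<and>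
     (\<forall>a b c \<alpha> \<beta>. mult a \<alpha> (mult b \<beta> c) = mult (mult a \<alpha> b) \<beta> c) \<and>
     (\<forall>a \<alpha>. mult 0 \<alpha> a = 0 \<and> mult a \<alpha> 0 = 0) \<and>
     (\<forall>a b. mult a 0 b = 0 \<and> mult b 0 a = 0)"

definition fuzzy_subset :: "('s \<Rightarrow> real) \<Rightarrow> bool" where
  "fuzzy_subset \<mu> \<longleftrightarrow> (\<forall>x. 0 \<le> \<mu> x \<and> \<mu> x \<le> 1)"

definition chi_S :: "'s \<Rightarrow> real" where
  "chi_S = (\<lambda>_. 1)"

text \<open>Generalized h-product; indices 1..n are rendered as 0..<n.\<close>
definition h_prod :: "('s::comm_monoid_add \<Rightarrow> 'g::comm_monoid_add \<Rightarrow> 's \<Rightarrow> 's) \<Rightarrow> ('s \<Rightarrow> real) \<Rightarrow> ('s \<Rightarrow> real) \<Rightarrow> 's \<Rightarrow> real" where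
  "h_prod mult \<mu> \<theta> x =
     (let V = {Min ((\<lambda>i. min (min (\<mu> (a i)) (\<mu> (c i))) (min (\<theta> (b i)) (\<theta> (d i)))) ` {..<n})
              | (n::nat) z a b c d \<gamma> \<delta>. n \<ge> 1 \<and>
                 x + (\<Sum>i<n. mult (a i) (\<gamma> i) (b i)) + z = (\<Sum>i<n. mult (c i) (\<delta> i) (d i)) + z}
      in if V = {} then 0 else Sup V)"

definition fuzzy_h_quasi_ideal :: "('s::comm_monoid_add \<Rightarrow> 'g::comm_monoid_add \<Rightarrow> 's \<Rightarrow> 's) \<Rightarrow> ('s \<Rightarrow> real) \<Rightarrow> bool" where
  "fuzzy_h_quasi_ideal mult \<mu> \<longleftrightarrow>
     fuzzy_subset \<mu> \<and>
     (\<forall>x y. \<mu> (x + y) \<ge> min (\<mu> x) (\<mu> y)) \<and>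
     (\<forall>x a b z. x + a + z = b + z \<longrightarrow> \<mu> x \<ge> min (\<mu> a) (\<mu> b)) \<and>
     (\<forall>x. min (h_prod mult \<mu> chi_S x) (h_prod mult chi_S \<mu> x) \<le> \<mu> x)"

definition extension :: "('s \<Rightarrow> 'g \<Rightarrow> 's \<Rightarrow> 's) \<Rightarrow> 's \<Rightarrow> ('s \<Rightarrow> real) \<Rightarrow> 's \<Rightarrow> real" where
  "extension mult x \<mu> y = Inf {\<mu> (mult (mult x \<alpha> s) \<gamma> y) | s \<alpha> \<gamma>. True}"

end

theory Submission
  imports Defs
begin

text \<open>Writing \<open>x\<alpha>s\<gamma>(a\<beta>b) = x\<alpha>(s\<gamma>a)\<beta>b\<close>, the infimum over \<open>s\<close> defining \<open>\<langle>x,\<mu>\<rangle>\<close> absorbs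
  multiplication from the left, so \<open>\<langle>x,\<mu>\<rangle>(a\<beta>b) \<ge> \<langle>x,\<mu>\<rangle>(b)\<close>. Left distributivity moves
  additive closure and h-closure from \<open>\<mu>\<close> to \<open>\<langle>x,\<mu>\<rangle>\<close>. A fuzzy subset with these three
  properties dominates \<open>\<chi>\<^sub>S o\<^sub>h \<theta>\<close>, since both sides of an h-equation
  \<open>y + \<Sigma>a\<^sub>i\<gamma>\<^sub>ib\<^sub>i + z = \<Sigma>c\<^sub>i\<delta>\<^sub>id\<^sub>i + z\<close> are sums of products; hence it is a fuzzy h-quasi-ideal.\<close>

lemma gamma_hemiring_distrib_left:
  "gamma_hemiring mult \<Longrightarrow> mult a \<alpha> (b + c) = mult a \<alpha> b + mult a \<alpha> c"
  unfolding gamma_hemiring_def by blast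

lemma gamma_hemiring_assoc:
  "gamma_hemiring mult \<Longrightarrow> mult a \<alpha> (mult b \<beta> c) = mult (mult a \<alpha> b) \<beta> c"
  unfolding gamma_hemiring_def by blast

lemma Min_le_sum_if_add_closed:
  fixes \<theta> :: "'s::comm_monoid_add \<Rightarrow> real"
  assumes add: "\<And>a b. min (\<theta> a) (\<theta> b) \<le> \<theta> (a + b)"
    and "finite I" "I \<noteq> {}" "\<forall>i\<in>I. g i \<le> \<theta> (f i)"
  shows "Min (g ` I) \<le> \<theta> (\<Sum>i\<in>I. f i)"
  using assms(2-4)
proof (induction I rule: finite_ne_induct)
  case (singleton i)
  then show ?case by simp
next
  case (insert i F)
  have "Min (g ` insert i F) = min (g i) (Min (g ` F))"
    using insert by simp
  also have "\<dots> \<le> min (\<theta> (f i)) (\<theta> (\<Sum>i\<in>F. f i))"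
    using insert by (intro min.mono) auto
  also have "\<dots> \<le> \<theta> (f i + (\<Sum>i\<in>F. f i))"
    by (rule add)
  finally show ?case
    using insert by simp
qed

lemma h_prod_chi_S_le:
  fixes \<theta> :: "'s::comm_monoid_add \<Rightarrow> real"
    and mult :: "'s \<Rightarrow> 'g::comm_monoid_add \<Rightarrow> 's \<Rightarrow> 's"
  assumes nonneg: "0 \<le> \<theta> y"
    and add: "\<And>a b. min (\<theta> a) (\<theta> b) \<le> \<theta> (a + b)"
    and h_closed: "\<And>y a b z. y + a + z = b + z \<Longrightarrow> min (\<theta> a) (\<theta> b) \<le> \<theta> y"
    and left: "\<And>a \<beta> b. \<theta> b \<le> \<theta> (mult a \<beta> b)"
  shows "h_prod mult chi_S \<theta> y \<le> \<theta> y"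
proof -
  have bound: "Min ((\<lambda>i. min (min (chi_S (a i)) (chi_S (c i))) (min (\<theta> (b i)) (\<theta> (d i)))) ` {..<n})
      \<le> \<theta> y"
    if "n \<ge> 1"
      and eq: "y + (\<Sum>i<n. mult (a i) (\<gamma> i) (b i)) + z = (\<Sum>i<n. mult (c i) (\<delta> i) (d i)) + z"
    for n :: nat and z a b c d \<gamma> \<delta>
  proof -
    let ?g = "\<lambda>i. min (min (chi_S (a i)) (chi_S (c i))) (min (\<theta> (b i)) (\<theta> (d i)))"
    have ne: "{..<n} \<noteq> {}"
      using \<open>n \<ge> 1\<close> by (simp add: lessThan_empty_iff)
    have "\<forall>i\<in>{..<n}. ?g i \<le> \<theta> (mult (a i) (\<gamma> i) (b i))"
      using left by (meson dual_order.trans min.cobounded1 min.cobounded2)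
    then have "Min (?g ` {..<n}) \<le> \<theta> (\<Sum>i<n. mult (a i) (\<gamma> i) (b i))"
      by (rule Min_le_sum_if_add_closed[OF add finite_lessThan ne])
    moreover have "\<forall>i\<in>{..<n}. ?g i \<le> \<theta> (mult (c i) (\<delta> i) (d i))"
      using left by (meson dual_order.trans min.cobounded1 min.cobounded2)
    then have "Min (?g ` {..<n}) \<le> \<theta> (\<Sum>i<n. mult (c i) (\<delta> i) (d i))"
      by (rule Min_le_sum_if_add_closed[OF add finite_lessThan ne])
    ultimately show ?thesis
      using h_closed[OF eq] by linarith
  qed
  then show ?thesis
    unfolding h_prod_def Let_def
    using nonneg by (auto intro!: cSup_least)
qed

lemma fuzzy_h_quasi_idealI_left_absorbing:
  assumes "fuzzy_subset \<theta>"
    and "\<And>a b. min (\<theta> a) (\<theta> b) \<le> \<theta> (a + b)"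
    and "\<And>y a b z. y + a + z = b + z \<Longrightarrow> min (\<theta> a) (\<theta> b) \<le> \<theta> y"
    and "\<And>a \<beta> b. \<theta> b \<le> \<theta> (mult a \<beta> b)"
  shows "fuzzy_h_quasi_ideal mult \<theta>"
proof -
  have "h_prod mult chi_S \<theta> y \<le> \<theta> y" for y
    using assms by (intro h_prod_chi_S_le) (auto simp: fuzzy_subset_def)
  then show ?thesis
    using assms unfolding fuzzy_h_quasi_ideal_def by (auto simp: min_le_iff_disj)
qed

lemma extension_le:
  assumes "fuzzy_subset \<mu>"
  shows "extension mult x \<mu> y \<le> \<mu> (mult (mult x \<alpha> s) \<gamma> y)"
proof -
  have "bdd_below {\<mu> (mult (mult x \<alpha> s) \<gamma> y) | s \<alpha> \<gamma>. True}"
    using assms unfolding bdd_below_def fuzzy_subset_def by blast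
  then show ?thesis
    unfolding extension_def by (rule cInf_lower[rotated]) blast
qed

lemma extension_greatest:
  assumes "\<And>s \<alpha> \<gamma>. c \<le> \<mu> (mult (mult x \<alpha> s) \<gamma> y)"
  shows "c \<le> extension mult x \<mu> y"
  unfolding extension_def by (rule cInf_greatest) (use assms in auto)

lemma fuzzy_subset_extension:
  assumes "fuzzy_subset \<mu>"
  shows "fuzzy_subset (extension mult x \<mu>)"
  unfolding fuzzy_subset_def
proof
  fix y
  show "0 \<le> extension mult x \<mu> y \<and> extension mult x \<mu> y \<le> 1"
  proof
    show "0 \<le> extension mult x \<mu> y"
      using assms unfolding fuzzy_subset_def by (blast intro: extension_greatest)
    show "extension mult x \<mu> y \<le> 1"
      using assms extension_le[OF assms]
      unfolding fuzzy_subset_def by (meson order_trans)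
  qed
qed

lemma extension_add:
  assumes "gamma_hemiring mult" "fuzzy_subset \<mu>"
    and add: "\<And>a b. min (\<mu> a) (\<mu> b) \<le> \<mu> (a + b)"
  shows "min (extension mult x \<mu> a) (extension mult x \<mu> b) \<le> extension mult x \<mu> (a + b)"
proof (rule extension_greatest)
  fix s \<alpha> \<gamma>
  let ?m = "mult (mult x \<alpha> s) \<gamma>"
  have "min (extension mult x \<mu> a) (extension mult x \<mu> b) \<le> min (\<mu> (?m a)) (\<mu> (?m b))"
    by (intro min.mono extension_le[OF assms(2)])
  also have "\<dots> \<le> \<mu> (?m (a + b))"
    using add gamma_hemiring_distrib_left[OF assms(1)] by metis
  finally show "min (extension mult x \<mu> a) (extension mult x \<mu> b) \<le> \<mu> (?m (a + b))" .
qed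

lemma extension_h_closed:
  assumes "gamma_hemiring mult" "fuzzy_subset \<mu>"
    and h_closed: "\<And>y a b z. y + a + z = b + z \<Longrightarrow> min (\<mu> a) (\<mu> b) \<le> \<mu> y"
    and eq: "y + a + z = b + z"
  shows "min (extension mult x \<mu> a) (extension mult x \<mu> b) \<le> extension mult x \<mu> y"
proof (rule extension_greatest)
  fix s \<alpha> \<gamma>
  let ?m = "mult (mult x \<alpha> s) \<gamma>"
  have "?m y + ?m a + ?m z = ?m b + ?m z"
    using eq gamma_hemiring_distrib_left[OF assms(1)] by metis
  then have "min (\<mu> (?m a)) (\<mu> (?m b)) \<le> \<mu> (?m y)"
    by (rule h_closed)
  moreover have "min (extension mult x \<mu> a) (extension mult x \<mu> b) \<le> min (\<mu> (?m a)) (\<mu> (?m b))"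
    by (intro min.mono extension_le[OF assms(2)])
  ultimately show "min (extension mult x \<mu> a) (extension mult x \<mu> b) \<le> \<mu> (?m y)"
    by linarith
qed

lemma extension_mult_left:
  assumes "gamma_hemiring mult" "fuzzy_subset \<mu>"
  shows "extension mult x \<mu> b \<le> extension mult x \<mu> (mult a \<beta> b)"
proof (rule extension_greatest)
  fix s \<alpha> \<gamma>
  have "mult (mult x \<alpha> s) \<gamma> (mult a \<beta> b) = mult (mult x \<alpha> (mult s \<gamma> a)) \<beta> b"
    using gamma_hemiring_assoc[OF assms(1)] by metis
  then show "extension mult x \<mu> b \<le> \<mu> (mult (mult x \<alpha> s) \<gamma> (mult a \<beta> b))"
    using extension_le[OF assms(2)] by metis
qed

theorem proposition3p10:
  fixes mult :: "'s::comm_monoid_add \<Rightarrow> 'g::comm_monoid_add \<Rightarrow> 's \<Rightarrow> 's"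
    and \<mu> :: "'s \<Rightarrow> real" and x :: 's
  assumes "gamma_hemiring mult"
    and "fuzzy_h_quasi_ideal mult \<mu>"
  shows "fuzzy_h_quasi_ideal mult (extension mult x \<mu>)"
proof -
  have fs: "fuzzy_subset \<mu>"
    and add: "\<And>a b. min (\<mu> a) (\<mu> b) \<le> \<mu> (a + b)"
    and h_closed: "\<And>y a b z. y + a + z = b + z \<Longrightarrow> min (\<mu> a) (\<mu> b) \<le> \<mu> y"
    using assms(2) unfolding fuzzy_h_quasi_ideal_def by blast+
  show ?thesis
  proof (rule fuzzy_h_quasi_idealI_left_absorbing)
    show "fuzzy_subset (extension mult x \<mu>)"
      using fs by (rule fuzzy_subset_extension)
    show "min (extension mult x \<mu> a) (extension mult x \<mu> b) \<le> extension mult x \<mu> (a + b)" for a b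
      using assms(1) fs add by (rule extension_add)
    show "min (extension mult x \<mu> a) (extension mult x \<mu> b) \<le> extension mult x \<mu> y"
      if "y + a + z = b + z" for y a b z
      using assms(1) fs h_closed that by (rule extension_h_closed)
    show "extension mult x \<mu> b \<le> extension mult x \<mu> (mult a \<beta> b)" for a \<beta> b
      using assms(1) fs by (rule extension_mult_left)
  qed
qed

end
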